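(* Let $\bm{X},\bm{X}_\star\in\mathbb{R}^{n_1\times r}$ and $\bm{Y},\bm{Y}_\star\in\mathbb{R}^{n_2\times r}$ be arbitrary. Suppose there exists an invertible $\bm{Q}\in\mathbb{R}^{r\times r}$ minimizing $\|\bm{X}\bm{P}-\bm{X}_\star\|_{\mathrm{F}}^2+\|\bm{Y}\bm{P}^{-\top}-\bm{Y}_\star\|_{\mathrm{F}}^2$ over all invertible $\bm{P}\in\mathbb{R}^{r\times r}$. Let $\tilde{\bm{X}}=\bm{X}\bm{Q}$ and $\tilde{\bm{Y}}=\bm{Y}\bm{Q}^{-\top}$. Then \[ \tilde{\bm{X}}^\top(\tilde{\bm{X}}-\bm{X}_\star)=(\tilde{\bm{Y}}-\bm{Y}_\star)^\top\tilde{\bm{Y}}. \]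
   Context: $\bm{P}^{-\top}=(\bm{P}^{-1})^\top$. *)

theory Defs
  imports "HOL-Analysis.Analysis"
begin

definition frob_sq :: "real^'c^'r \<Rightarrow> real" where
  "frob_sq A = (\<Sum>i\<in>UNIV. \<Sum>j\<in>UNIV. (A $ i $ j)^2)"

definition balance_obj ::
  "real^'r^'n1 \<Rightarrow> real^'r^'n1 \<Rightarrow> real^'r^'n2 \<Rightarrow> real^'r^'n2 \<Rightarrow> real^'r^'r \<Rightarrow> real" where
  "balance_obj X Xs Y Ys P =
     frob_sq (X ** P - Xs) + frob_sq (Y ** transpose (matrix_inv P) - Ys)"

end

theory Submission
  imports Defs
begin

text \<open>Perturb the minimiser along the curve \<open>Q (I + t E)\<close> with \<open>E\<close> a matrix unit
  \<open>e\<^sub>k e\<^sub>l\<^sup>T\<close>. Since \<open>E\<^sup>2 = c E\<close>, the inverse is \<open>I + \<phi>(t) E\<close> with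
  \<open>\<phi>(t) = -t/(1 + c t)\<close> and \<open>\<phi>'(0) = -1\<close>, so the objective becomes
  \<open>\<parallel>A + t B\<parallel>\<^sup>2 + \<parallel>C + \<phi>(t) D\<parallel>\<^sup>2\<close>, whose vanishing derivative at the minimum \<open>t = 0\<close>
  gives \<open>\<langle>A, B\<rangle> = \<langle>C, D\<rangle>\<close>. For \<open>A = X Q - X\<^sub>\<star>\<close>, \<open>B = X Q E\<close>,
  \<open>C = Y Q\<^sup>-\<^sup>T - Y\<^sub>\<star>\<close>, \<open>D = Y Q\<^sup>-\<^sup>T E\<^sup>T\<close> this is the \<open>(k, l)\<close> entry of the claimed identity.\<close>

lemma matrix_add_rdistrib: "(A + B) ** C = A ** C + B ** C"
  by (vector matrix_matrix_mult_def sum.distrib[symmetric] field_simps)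

lemma transpose_add: "transpose (A + B) = transpose A + transpose B"
  by (simp add: transpose_def vec_eq_iff)

lemma matrix_inv_unique:
  fixes A :: "'a::semiring_1^'n^'m"
  assumes "A ** B = mat 1" "B ** A = mat 1"
  shows "matrix_inv A = B"
proof -
  have "A ** matrix_inv A = mat 1 \<and> matrix_inv A ** A = mat 1"
    unfolding matrix_inv_def by (rule someI[of _ B]) (use assms in auto)
  then show ?thesis
    by (metis matrix_mul_assoc matrix_mul_lid matrix_mul_rid assms(1))
qed

lemma matrix_inv_inverse:
  fixes A :: "'a::semiring_1^'n^'m"
  assumes "invertible A"
  shows "A ** matrix_inv A = mat 1" "matrix_inv A ** A = mat 1"
  using assms someI_ex[of "\<lambda>A'. A ** A' = mat 1 \<and> A' ** A = mat 1"]
  unfolding invertible_def matrix_inv_def by auto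

lemma matrix_inv_mult:
  fixes A :: "'a::semiring_1^'n^'m" and B :: "'a^'k^'n"
  assumes "invertible A" "invertible B"
  shows "matrix_inv (A ** B) = matrix_inv B ** matrix_inv A"
proof (rule matrix_inv_unique)
  show "A ** B ** (matrix_inv B ** matrix_inv A) = mat 1"
    by (metis assms matrix_inv_inverse(1) matrix_mul_assoc matrix_mul_rid)
  show "matrix_inv B ** matrix_inv A ** (A ** B) = mat 1"
    by (metis assms matrix_inv_inverse(2) matrix_mul_assoc matrix_mul_rid)
qed

lemma mat_1_plus_scaleR_inverse:
  fixes E :: "real^'n^'n"
  assumes "E ** E = c *\<^sub>R E" and "s * (1 + c * t) = - t"
  shows "(mat 1 + t *\<^sub>R E) ** (mat 1 + s *\<^sub>R E) = mat 1"
    and "(mat 1 + s *\<^sub>R E) ** (mat 1 + t *\<^sub>R E) = mat 1"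
proof -
  have "(mat 1 + a *\<^sub>R E) ** (mat 1 + b *\<^sub>R E) = mat 1 + (a + b + a * b * c) *\<^sub>R E" for a b
    by (simp add: matrix_add_ldistrib matrix_add_rdistrib matrix_scalar_ac
        flip: scalar_matrix_assoc) (simp add: assms(1) algebra_simps)
  moreover have "t + s + t * s * c = 0" "s + t + s * t * c = 0"
    using assms(2) by (simp_all add: algebra_simps)
  ultimately show "(mat 1 + t *\<^sub>R E) ** (mat 1 + s *\<^sub>R E) = mat 1"
    and "(mat 1 + s *\<^sub>R E) ** (mat 1 + t *\<^sub>R E) = mat 1"
    by simp_all
qed

lemma frob_sq_eq_inner: "frob_sq A = A \<bullet> A"
  by (simp add: frob_sq_def inner_vec_def power2_eq_square)

definition matrix_unit :: "'n \<Rightarrow> 'm \<Rightarrow> 'a::zero_neq_one^'m^'n" where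
  "matrix_unit k l = (\<chi> i j. if i = k \<and> j = l then 1 else 0)"

lemma matrix_mul_matrix_unit:
  fixes A :: "'a::semiring_1^'n^'p"
  shows "(A ** matrix_unit k l) $ i $ j = (if j = l then A $ i $ k else 0)"
  by (simp add: matrix_matrix_mult_def matrix_unit_def if_distrib[where f="\<lambda>x. _ * x"] cong: if_cong)

lemma transpose_matrix_unit: "transpose (matrix_unit k l) = matrix_unit l k"
  by (auto simp add: transpose_def matrix_unit_def vec_eq_iff)

lemma matrix_unit_mult_self:
  "matrix_unit k l ** matrix_unit k l = (if k = l then 1 else 0) *\<^sub>R (matrix_unit k l :: real^'n^'n)"
  by (auto simp: vec_eq_iff matrix_mul_matrix_unit) (auto simp: matrix_unit_def)

lemma inner_matrix_mul_matrix_unit: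
  fixes A B :: "real^'n^'p"
  shows "B \<bullet> (A ** matrix_unit k l) = (transpose A ** B) $ k $ l"
  by (simp add: inner_vec_def matrix_mul_matrix_unit if_distrib[where f="\<lambda>x. _ * x"] cong: if_cong)
    (simp add: matrix_matrix_mult_def transpose_def mult.commute)

lemma inner_eq_of_local_min:
  fixes A B :: "'a::real_inner" and C D :: "'b::real_inner"
  assumes "(\<phi> has_real_derivative -1) (at 0)" "\<phi> 0 = 0" "d > 0"
    and "\<And>t. \<bar>t\<bar> < d \<Longrightarrow>
      A \<bullet> A + C \<bullet> C \<le> (A + t *\<^sub>R B) \<bullet> (A + t *\<^sub>R B) + (C + \<phi> t *\<^sub>R D) \<bullet> (C + \<phi> t *\<^sub>R D)"
  shows "A \<bullet> B = C \<bullet> D"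
proof -
  define f where "f t = A \<bullet> A + 2 * t * (A \<bullet> B) + t^2 * (B \<bullet> B)
    + C \<bullet> C + 2 * \<phi> t * (C \<bullet> D) + (\<phi> t)^2 * (D \<bullet> D)" for t
  have "(f has_real_derivative 2 * (A \<bullet> B) - 2 * (C \<bullet> D)) (at 0)"
    unfolding f_def using assms(1,2) by (auto intro!: derivative_eq_intros)
  moreover have "\<forall>t. \<bar>0 - t\<bar> < d \<longrightarrow> f 0 \<le> f t"
    using assms(2,4) by (simp add: f_def inner_commute power2_eq_square algebra_simps)
  ultimately have "2 * (A \<bullet> B) - 2 * (C \<bullet> D) = 0"
    using DERIV_local_min assms(3) by blast
  then show ?thesis by simp
qed

lemma balance_obj_first_order_condition:
  fixes X Xs :: "real^'r^'n1" and Y Ys :: "real^'r^'n2" and Q E :: "real^'r^'r"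
  assumes "invertible Q"
    and "\<And>P. invertible P \<Longrightarrow> balance_obj X Xs Y Ys Q \<le> balance_obj X Xs Y Ys P"
    and "E ** E = c *\<^sub>R E"
  shows "(X ** Q - Xs) \<bullet> (X ** Q ** E)
    = (Y ** transpose (matrix_inv Q) - Ys) \<bullet> (Y ** transpose (matrix_inv Q) ** transpose E)"
proof -
  let ?A = "X ** Q - Xs" and ?B = "X ** Q ** E"
    and ?C = "Y ** transpose (matrix_inv Q) - Ys" and ?D = "Y ** transpose (matrix_inv Q) ** transpose E"
  define \<phi> where "\<phi> t = - t / (1 + c * t)" for t
  define d where "d = 1 / (\<bar>c\<bar> + 1)"
  have perturbed: "invertible (Q ** (mat 1 + t *\<^sub>R E)) \<and> balance_obj X Xs Y Ys (Q ** (mat 1 + t *\<^sub>R E))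
      = (?A + t *\<^sub>R ?B) \<bullet> (?A + t *\<^sub>R ?B) + (?C + \<phi> t *\<^sub>R ?D) \<bullet> (?C + \<phi> t *\<^sub>R ?D)"
    if "\<bar>t\<bar> < d" for t
  proof -
    have "\<bar>c * t\<bar> < 1"
      using that by (simp add: d_def abs_mult field_simps)
    then have "\<phi> t * (1 + c * t) = - t"
      by (simp add: \<phi>_def)
    note inverse = mat_1_plus_scaleR_inverse[OF assms(3) this]
    then have invertible: "invertible (mat 1 + t *\<^sub>R E)"
      unfolding invertible_def by blast
    moreover have "matrix_inv (mat 1 + t *\<^sub>R E) = mat 1 + \<phi> t *\<^sub>R E"
      using inverse by (rule matrix_inv_unique)
    ultimately have "matrix_inv (Q ** (mat 1 + t *\<^sub>R E)) = (mat 1 + \<phi> t *\<^sub>R E) ** matrix_inv Q"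
      using assms(1) by (simp add: matrix_inv_mult)
    then have Y_part: "Y ** transpose (matrix_inv (Q ** (mat 1 + t *\<^sub>R E))) - Ys = ?C + \<phi> t *\<^sub>R ?D"
      by (simp add: matrix_transpose_mul transpose_add transpose_scalar matrix_add_ldistrib
          matrix_scalar_ac matrix_mul_assoc flip: scalar_matrix_assoc)
    have X_part: "X ** (Q ** (mat 1 + t *\<^sub>R E)) - Xs = ?A + t *\<^sub>R ?B"
      by (simp add: matrix_add_ldistrib matrix_scalar_ac matrix_mul_assoc flip: scalar_matrix_assoc)
    show ?thesis
      using assms(1) invertible
      by (simp add: invertible_mult balance_obj_def frob_sq_eq_inner X_part Y_part)
  qed
  show ?thesis
  proof (rule inner_eq_of_local_min[where \<phi> = \<phi> and d = d])
    show "(\<phi> has_real_derivative -1) (at 0)"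
      unfolding \<phi>_def[abs_def] by (auto intro!: derivative_eq_intros)
    show "?A \<bullet> ?A + ?C \<bullet> ?C
        \<le> (?A + t *\<^sub>R ?B) \<bullet> (?A + t *\<^sub>R ?B) + (?C + \<phi> t *\<^sub>R ?D) \<bullet> (?C + \<phi> t *\<^sub>R ?D)"
      if "\<bar>t\<bar> < d" for t
      using perturbed[OF that] assms(2) by (metis balance_obj_def frob_sq_eq_inner)
  qed (simp_all add: \<phi>_def d_def)
qed

theorem lemma2:
  fixes X Xs :: "real^'r^'n1" and Y Ys :: "real^'r^'n2" and Q :: "real^'r^'r"
  assumes "invertible Q"
    and "\<And>P. invertible P \<Longrightarrow> balance_obj X Xs Y Ys Q \<le> balance_obj X Xs Y Ys P"
  shows "transpose (X ** Q) ** (X ** Q - Xs)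
           = transpose (Y ** transpose (matrix_inv Q) - Ys) ** (Y ** transpose (matrix_inv Q))"
proof -
  let ?Xt = "X ** Q" and ?Yt = "Y ** transpose (matrix_inv Q)"
  have "(transpose ?Xt ** (?Xt - Xs)) $ k $ l = (transpose (?Yt - Ys) ** ?Yt) $ k $ l" for k l
  proof -
    have "(?Xt - Xs) \<bullet> (?Xt ** matrix_unit k l) = (?Yt - Ys) \<bullet> (?Yt ** matrix_unit l k)"
      using balance_obj_first_order_condition[OF assms matrix_unit_mult_self]
      by (simp add: transpose_matrix_unit)
    then have "(transpose ?Xt ** (?Xt - Xs)) $ k $ l = transpose (transpose ?Yt ** (?Yt - Ys)) $ k $ l"
      by (simp add: inner_matrix_mul_matrix_unit transpose_def)
    then show ?thesis
      by (simp add: matrix_transpose_mul)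
  qed
  then show ?thesis
    by (simp add: vec_eq_iff)
qed

end
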